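(* Fix a task $(\mathcal{S},\mathcal{A},\_,d_0,\mathcal{R},\gamma)$ and let $\Pi_{\mathrm{NS}}$ be the set of all non-stationary policies. Let $\mathcal{T},\mathcal{T}'$ be transition models such that $J_{\mathcal{T}}$ and $J_{\mathcal{T}'}$ are both non-trivial on $\Pi_{\mathrm{NS}}$ and are not equivalent on $\Pi_{\mathrm{NS}}$. Then $(\mathcal{T},\mathcal{T}')$ is exploitable relative to $\Pi_{\mathrm{NS}}$ and this task.
   Context: A Markov decision process (MDP) is $(\mathcal{S},\mathcal{A},\mathcal{T},d_0,\mathcal{R},\gamma)$ with finite state space $\mathcal{S}$, finite action space $\mathcal{A}$ with $|\mathcal{A}|>1$, transition model $\mathcal{T}:\mathcal{S}\times\mathcal{A}\to\Delta(\mathcal{S})$, initial distribution $d_0\in\Delta(\mathcal{S})$, reward $\mathcal{R}:\mathcal{S}\times\mathcal{A}\to\mathbb{R}$, discount $\gamma\in[0,1)$; all states are assumed reachable. A task is an MDP without its transition model, $(\mathcal{S},\mathcal{A},\_,d_0,\mathcal{R},\gamma)$. A non-stationary policy is a sequence $\pi=(\pi_0,\pi_1,\dots)$ of maps $\pi_t:\mathcal{S}\to\Delta(\mathcal{A})$ (action at time $t$ drawn from $\pi_t(\cdot\mid s_t)$). For a transition model $\mathcal{T}$, $J_{\mathcal{T}}(\pi)=\mathbb{E}\big[\sum_{t\ge0}\gamma^t\mathcal{R}(s_t,a_t)\big]$ where $s_0\sim d_0$, $a_t\sim\pi_t(\cdot\mid s_t)$, $s_{t+1}\sim\mathcal{T}(\cdot\mid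 s_t,a_t)$. A value function $J$ is trivial on a policy set $\Pi$ if it is constant on $\Pi$. Two value functions $J_1,J_2$ are equivalent on $\Pi$ if for all $\pi,\pi'\in\Pi$, $J_1(\pi)\ge J_1(\pi')\iff J_2(\pi)\ge J_2(\pi')$. Transition models $\mathcal{T},\mathcal{T}'$ are exploitable relative to $\Pi$ and a task if there exist $\pi,\pi'\in\Pi$ with $J_{\mathcal{T}}(\pi)>J_{\mathcal{T}}(\pi')$ and $J_{\mathcal{T}'}(\pi')>J_{\mathcal{T}'}(\pi)$; otherwise unexploitable. *)

theory Defs
  imports "HOL-Probability.Probability"
begin

text \<open>A non-stationary policy is pi :: nat => 's => 'a pmf (pi t s is the action distribution at time t).\<close>

type_synonym ('s, 'a) transition = "'s \<Rightarrow> 'a \<Rightarrow> 's pmf"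
type_synonym ('s, 'a) ns_policy = "nat \<Rightarrow> 's \<Rightarrow> 'a pmf"

fun state_dist :: "('s, 'a) transition \<Rightarrow> 's pmf \<Rightarrow> ('s, 'a) ns_policy \<Rightarrow> nat \<Rightarrow> 's pmf" where
  "state_dist T d0 \<pi> 0 = d0"
| "state_dist T d0 \<pi> (Suc t) =
     bind_pmf (state_dist T d0 \<pi> t) (\<lambda>s. bind_pmf (\<pi> t s) (\<lambda>a. T s a))"

definition step_reward :: "('s, 'a) transition \<Rightarrow> 's pmf \<Rightarrow> ('s \<Rightarrow> 'a \<Rightarrow> real)
    \<Rightarrow> ('s, 'a) ns_policy \<Rightarrow> nat \<Rightarrow> real" where
  "step_reward T d0 R \<pi> t =
     measure_pmf.expectation (state_dist T d0 \<pi> t)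
       (\<lambda>s. measure_pmf.expectation (\<pi> t s) (\<lambda>a. R s a))"

definition J :: "('s, 'a) transition \<Rightarrow> 's pmf \<Rightarrow> ('s \<Rightarrow> 'a \<Rightarrow> real) \<Rightarrow> real
    \<Rightarrow> ('s, 'a) ns_policy \<Rightarrow> real" where
  "J T d0 R \<gamma> \<pi> = (\<Sum>t. \<gamma> ^ t * step_reward T d0 R \<pi> t)"

definition all_reachable :: "('s, 'a) transition \<Rightarrow> 's pmf \<Rightarrow> bool" where
  "all_reachable T d0 \<longleftrightarrow> (\<forall>s. \<exists>\<pi> t. pmf (state_dist T d0 \<pi> t) s > 0)"

definition trivial_on :: "('p \<Rightarrow> real) \<Rightarrow> 'p set \<Rightarrow> bool" where
  "trivial_on Jf P \<longleftrightarrow> (\<exists>c. \<forall>\<pi>\<in>P. Jf \<pi> = c)"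

definition equivalent_on :: "('p \<Rightarrow> real) \<Rightarrow> ('p \<Rightarrow> real) \<Rightarrow> 'p set \<Rightarrow> bool" where
  "equivalent_on J1 J2 P \<longleftrightarrow>
     (\<forall>\<pi>\<in>P. \<forall>\<pi>'\<in>P. J1 \<pi> \<ge> J1 \<pi>' \<longleftrightarrow> J2 \<pi> \<ge> J2 \<pi>')"

definition exploitable :: "('s, 'a) transition \<Rightarrow> ('s, 'a) transition \<Rightarrow> ('s, 'a) ns_policy set
    \<Rightarrow> 's pmf \<Rightarrow> ('s \<Rightarrow> 'a \<Rightarrow> real) \<Rightarrow> real \<Rightarrow> bool" where
  "exploitable T T' P d0 R \<gamma> \<longleftrightarrow>
     (\<exists>\<pi>\<in>P. \<exists>\<pi>'\<in>P. J T d0 R \<gamma> \<pi> > J T d0 R \<gamma> \<pi>' \<and> J T' d0 R \<gamma> \<pi>' > J T' d0 R \<gamma> \<pi>)"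

end

theory Submission
  imports Defs
begin

text \<open>Write f and g for the values under T and T'. Both are affine in the action distribution
  used at any single time step, and two policies that agree before time n have values within
  O(\<gamma>^n) of each other. If the pair were unexploitable while the orderings differ, then
  (possibly after swapping T and T') there are \<pi>, \<pi>' with f \<pi> = f \<pi>' and g \<pi> < g \<pi>';
  unexploitability forces f to equal f \<pi> on the band g \<pi> < g < g \<pi>'. Switching from \<pi> to \<pi>'
  one time step at a time produces a policy r inside the band, and the two estimates show that the
  band contains all policies whose first N steps are l-mixtures of r with arbitrary distributions.
  Affinity of f in each of these N steps spreads its constant value from this neighbourhood to
  every policy, so f is trivial.\<close>

section \<open>Mixtures of distributions\<close>

definition mix_pmf :: "real \<Rightarrow> 'b pmf \<Rightarrow> 'b pmf \<Rightarrow> 'b pmf" where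
  "mix_pmf l p q = bind_pmf (bernoulli_pmf l) (\<lambda>b. if b then q else p)"

lemma mix_pmf_same [simp]: "mix_pmf l p p = p"
  by (simp add: mix_pmf_def)

lemma pmf_mix_pmf:
  "0 \<le> l \<Longrightarrow> l \<le> 1 \<Longrightarrow> pmf (mix_pmf l p q) x = (1 - l) * pmf p x + l * pmf q x"
  unfolding mix_pmf_def pmf_bind by (simp add: integral_measure_pmf_real[where A=UNIV] UNIV_bool)

lemma bind_mix_pmf:
  "bind_pmf (mix_pmf l p q) f = mix_pmf l (bind_pmf p f) (bind_pmf q f)"
  unfolding mix_pmf_def bind_assoc_pmf by (intro bind_pmf_cong) simp_all

lemma bind_pmf_mix_pmf:
  "bind_pmf D (\<lambda>s. mix_pmf l (p s) (q s)) = mix_pmf l (bind_pmf D p) (bind_pmf D q)"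
  unfolding mix_pmf_def by (subst bind_commute_pmf) (intro bind_pmf_cong, simp_all)

lemma expectation_mix_pmf:
  fixes p q :: "'b::finite pmf"
  assumes "0 \<le> l" "l \<le> 1"
  shows "measure_pmf.expectation (mix_pmf l p q) f =
    (1 - l) * measure_pmf.expectation p f + l * measure_pmf.expectation q f"
  using assms by (simp add: integral_measure_pmf_real[where A=UNIV] pmf_mix_pmf
      sum.distrib sum_distrib_left sum_subtractf algebra_simps)

lemma abs_expectation_le:
  fixes p :: "'b::finite pmf" and f :: "'b \<Rightarrow> real"
  assumes "\<And>x. \<bar>f x\<bar> \<le> M"
  shows "\<bar>measure_pmf.expectation p f\<bar> \<le> M"
proof -
  have "measure_pmf.expectation p f \<le> M"
    using assms
    by (intro measure_pmf.integral_le_const) (auto simp: integrable_measure_pmf_finite abs_le_iff)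
  moreover have "- M \<le> measure_pmf.expectation p f"
    using assms by (intro measure_pmf.integral_ge_const)
      (auto simp: integrable_measure_pmf_finite abs_le_iff minus_le_iff)
  ultimately show ?thesis by linarith
qed

section \<open>Values of non-stationary policies\<close>

lemma state_dist_cong:
  "(\<And>t'. t' < t \<Longrightarrow> x t' = y t') \<Longrightarrow> state_dist T d0 x t = state_dist T d0 y t"
  by (induction t) simp_all

lemma state_dist_mix_step:
  "state_dist T d0 (x(k := \<lambda>s. mix_pmf l (p s) (q s))) t =
     mix_pmf l (state_dist T d0 (x(k := p)) t) (state_dist T d0 (x(k := q)) t)"
proof (induction t)
  case 0
  show ?case by simp
next
  case (Suc t)
  show ?case
  proof (cases "t = k")
    case True
    have "state_dist T d0 (x(k := r)) t = state_dist T d0 x t" for r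
      using True by (intro state_dist_cong) simp
    then show ?thesis
      using True by (simp only: state_dist.simps fun_upd_same bind_mix_pmf bind_pmf_mix_pmf)
  next
    case False
    then have "(x(k := r)) t = x t" for r
      by simp
    then show ?thesis
      by (simp only: state_dist.simps Suc.IH bind_mix_pmf)
  qed
qed

lemma step_reward_mix_step:
  fixes T :: "('s::finite, 'a::finite) transition"
  assumes "0 \<le> l" "l \<le> 1"
  shows "step_reward T d0 R (x(k := \<lambda>s. mix_pmf l (p s) (q s))) t =
    (1 - l) * step_reward T d0 R (x(k := p)) t + l * step_reward T d0 R (x(k := q)) t"
proof (cases "t = k")
  case True
  have "state_dist T d0 (x(k := r)) t = state_dist T d0 x t" for r
    using True by (intro state_dist_cong) simp
  with True assms show ?thesis
    by (simp add: step_reward_def expectation_mix_pmf integrable_measure_pmf_finite)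
next
  case False
  then have "(x(k := r)) t = x t" for r
    by simp
  with assms show ?thesis
    by (simp only: step_reward_def state_dist_mix_step expectation_mix_pmf)
qed

lemma abs_step_reward_le:
  fixes T :: "('s::finite, 'a::finite) transition"
  assumes "\<And>s a. \<bar>R s a\<bar> \<le> M"
  shows "\<bar>step_reward T d0 R x t\<bar> \<le> M"
  unfolding step_reward_def
  by (intro abs_expectation_le) (simp add: abs_expectation_le assms)

lemma summable_discounted_step_reward:
  fixes T :: "('s::finite, 'a::finite) transition"
  assumes "\<And>s a. \<bar>R s a\<bar> \<le> M" "0 \<le> \<gamma>" "\<gamma> < 1"
  shows "summable (\<lambda>t. \<gamma> ^ t * step_reward T d0 R x t)"
proof (rule summable_comparison_test')
  show "summable (\<lambda>t. M * \<gamma> ^ t)"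
    using assms by (intro summable_mult summable_geometric) auto
  show "norm (\<gamma> ^ t * step_reward T d0 R x t) \<le> M * \<gamma> ^ t" for t
  proof -
    have "\<bar>step_reward T d0 R x t\<bar> \<le> M"
      by (rule abs_step_reward_le) (rule assms(1))
    then have "\<bar>step_reward T d0 R x t\<bar> * \<gamma> ^ t \<le> M * \<gamma> ^ t"
      using assms(2) by (intro mult_right_mono) simp_all
    with assms(2) show ?thesis
      by (simp add: abs_mult mult.commute)
  qed
qed

lemma J_mix_step:
  fixes T :: "('s::finite, 'a::finite) transition"
  assumes "\<And>s a. \<bar>R s a\<bar> \<le> M" "0 \<le> \<gamma>" "\<gamma> < 1" "0 \<le> l" "l \<le> 1"
  shows "J T d0 R \<gamma> (x(k := \<lambda>s. mix_pmf l (p s) (q s))) =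
    (1 - l) * J T d0 R \<gamma> (x(k := p)) + l * J T d0 R \<gamma> (x(k := q))"
proof -
  note summable = summable_discounted_step_reward[OF assms(1-3)]
  have "J T d0 R \<gamma> (x(k := \<lambda>s. mix_pmf l (p s) (q s))) =
    (\<Sum>t. (1 - l) * (\<gamma> ^ t * step_reward T d0 R (x(k := p)) t)
         + l * (\<gamma> ^ t * step_reward T d0 R (x(k := q)) t))"
    unfolding J_def step_reward_mix_step[OF assms(4,5)] by (simp add: algebra_simps)
  also have "\<dots> = (1 - l) * J T d0 R \<gamma> (x(k := p)) + l * J T d0 R \<gamma> (x(k := q))"
    unfolding J_def
    by (simp add: suminf_add[symmetric] suminf_mult summable summable_mult)
  finally show ?thesis .
qed

lemma abs_J_diff_le:
  fixes T :: "('s::finite, 'a::finite) transition"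
  assumes "\<And>s a. \<bar>R s a\<bar> \<le> M" "0 \<le> \<gamma>" "\<gamma> < 1"
    and agree: "\<And>t. t < n \<Longrightarrow> x t = y t"
  shows "\<bar>J T d0 R \<gamma> x - J T d0 R \<gamma> y\<bar> \<le> 2 * M / (1 - \<gamma>) * \<gamma> ^ n"
proof -
  define d where "d t = \<gamma> ^ t * (step_reward T d0 R x t - step_reward T d0 R y t)" for t
  note summable = summable_discounted_step_reward[OF assms(1-3)]
  have "summable d"
    unfolding d_def right_diff_distrib by (intro summable_diff summable)
  have "J T d0 R \<gamma> x - J T d0 R \<gamma> y = suminf d"
    unfolding J_def d_def right_diff_distrib by (intro suminf_diff summable)
  also have "\<dots> = (\<Sum>i. d (i + n))"
  proof -
    have "d t = 0" if "t < n" for t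
      using that agree unfolding d_def step_reward_def
      by (simp add: state_dist_cong[of t x y])
    then show ?thesis
      using suminf_split_initial_segment[OF \<open>summable d\<close>, of n] by simp
  qed
  also have "\<bar>\<dots>\<bar> \<le> (\<Sum>i. 2 * M * \<gamma> ^ n * \<gamma> ^ i)"
  proof (rule norm_suminf_le[of "\<lambda>i. d (i + n)", unfolded real_norm_def])
    show "summable (\<lambda>i. 2 * M * \<gamma> ^ n * \<gamma> ^ i)"
      using assms by (intro summable_mult summable_geometric) auto
    show "\<bar>d (i + n)\<bar> \<le> 2 * M * \<gamma> ^ n * \<gamma> ^ i" for i
    proof -
      have "\<bar>step_reward T d0 R z (i + n)\<bar> \<le> M" for z
        by (rule abs_step_reward_le) (rule assms(1))
      from this[of x] this[of y]
      have "\<bar>step_reward T d0 R x (i + n) - step_reward T d0 R y (i + n)\<bar> \<le> 2 * M"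
        by linarith
      then have "\<gamma> ^ n * \<gamma> ^ i * \<bar>step_reward T d0 R x (i + n) - step_reward T d0 R y (i + n)\<bar>
          \<le> \<gamma> ^ n * \<gamma> ^ i * (2 * M)"
        using assms(2) by (intro mult_left_mono) simp_all
      then show ?thesis
        unfolding d_def using assms(2) by (simp add: abs_mult power_add mult_ac)
    qed
  qed
  also have "\<dots> = 2 * M / (1 - \<gamma>) * \<gamma> ^ n"
    using assms(2,3) by (simp add: suminf_mult suminf_geometric)
  finally show ?thesis .
qed

lemma finite_reward_bounded:
  fixes R :: "'s::finite \<Rightarrow> 'a::finite \<Rightarrow> real"
  obtains M where "\<And>s a. \<bar>R s a\<bar> \<le> M"
proof
  show "\<bar>R s a\<bar> \<le> Max (range (\<lambda>(s, a). \<bar>R s a\<bar>))" for s a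
    by (rule Max_ge) (auto intro: rev_image_eqI[of "(s, a)"])
qed

section \<open>Step-wise affine, tail-bounded functions of policies\<close>

definition affine_in_steps :: "(('s, 'a) ns_policy \<Rightarrow> real) \<Rightarrow> bool" where
  "affine_in_steps f \<longleftrightarrow> (\<forall>x k l p q. 0 \<le> l \<longrightarrow> l \<le> 1 \<longrightarrow>
     f (x(k := \<lambda>s. mix_pmf l (p s) (q s))) = (1 - l) * f (x(k := p)) + l * f (x(k := q)))"

definition tail_bounded :: "(('s, 'a) ns_policy \<Rightarrow> real) \<Rightarrow> real \<Rightarrow> real \<Rightarrow> bool" where
  "tail_bounded f B \<gamma> \<longleftrightarrow> 0 \<le> \<gamma> \<and> \<gamma> < 1 \<and>
     (\<forall>n x y. (\<forall>t<n. x t = y t) \<longrightarrow> \<bar>f x - f y\<bar> \<le> B * \<gamma> ^ n)"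

lemma affine_in_stepsD:
  "affine_in_steps f \<Longrightarrow> 0 \<le> l \<Longrightarrow> l \<le> 1 \<Longrightarrow>
     f (x(k := \<lambda>s. mix_pmf l (p s) (q s))) = (1 - l) * f (x(k := p)) + l * f (x(k := q))"
  unfolding affine_in_steps_def by blast

lemma tail_boundedD:
  "tail_bounded f B \<gamma> \<Longrightarrow> (\<And>t. t < n \<Longrightarrow> x t = y t) \<Longrightarrow> \<bar>f x - f y\<bar> \<le> B * \<gamma> ^ n"
  unfolding tail_bounded_def by blast

lemma affine_in_steps_J:
  fixes T :: "('s::finite, 'a::finite) transition"
  assumes "\<And>s a. \<bar>R s a\<bar> \<le> M" "0 \<le> \<gamma>" "\<gamma> < 1"
  shows "affine_in_steps (J T d0 R \<gamma>)"
  unfolding affine_in_steps_def using J_mix_step[where R = R, OF assms] by blast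

lemma tail_bounded_J:
  fixes T :: "('s::finite, 'a::finite) transition"
  assumes "\<And>s a. \<bar>R s a\<bar> \<le> M" "0 \<le> \<gamma>" "\<gamma> < 1"
  shows "tail_bounded (J T d0 R \<gamma>) (2 * M / (1 - \<gamma>)) \<gamma>"
  unfolding tail_bounded_def using abs_J_diff_le[where R = R, OF assms] assms(2,3) by blast

lemma tail_bounded_eventually_small:
  assumes "tail_bounded f B \<gamma>" "0 < \<epsilon>"
  obtains n where "B * \<gamma> ^ n < \<epsilon>"
proof -
  have "(\<lambda>n. B * \<gamma> ^ n) \<longlonglongrightarrow> 0"
    using assms(1) unfolding tail_bounded_def
    by (intro tendsto_mult_right_zero LIMSEQ_power_zero) simp
  then have "\<forall>\<^sub>F n in sequentially. B * \<gamma> ^ n < \<epsilon>"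
    using assms(2) by (rule order_tendstoD)
  then show ?thesis
    using that eventually_sequentially by auto
qed

lemma tail_bounded_diameter:
  "tail_bounded f B \<gamma> \<Longrightarrow> \<bar>f x - f y\<bar> \<le> B"
  using tail_boundedD[of f B \<gamma> 0] by simp

definition perturb_on :: "nat set \<Rightarrow> real \<Rightarrow> ('s, 'a) ns_policy \<Rightarrow> ('s, 'a) ns_policy
    \<Rightarrow> ('s, 'a) ns_policy" where
  "perturb_on K l x w = (\<lambda>t. if t \<in> K then (\<lambda>s. mix_pmf l (x t s) (w t s)) else x t)"

lemma perturb_on_empty [simp]: "perturb_on {} l x w = x"
  by (simp add: perturb_on_def)

lemma abs_perturb_on_diff_le:
  assumes "affine_in_steps f" and diam: "\<And>x y. \<bar>f x - f y\<bar> \<le> D"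
    and "0 \<le> l" "l \<le> 1" "finite K"
  shows "\<bar>f (perturb_on K l x w) - f x\<bar> \<le> real (card K) * l * D"
  using \<open>finite K\<close>
proof (induction K rule: finite_induct)
  case empty
  then show ?case by simp
next
  case (insert j K)
  define z where "z = perturb_on K l x w"
  have "perturb_on (insert j K) l x w = z(j := \<lambda>s. mix_pmf l (x j s) (w j s))"
    "z(j := x j) = z"
    using insert.hyps(2) by (auto simp: z_def perturb_on_def)
  then have "f (perturb_on (insert j K) l x w) - f z = l * (f (z(j := w j)) - f z)"
    using affine_in_stepsD[OF assms(1,3,4), of z j "x j" "w j"]
    by (simp add: algebra_simps)
  also have "\<bar>\<dots>\<bar> \<le> l * D"
    using diam assms(3) by (simp add: abs_mult mult_left_mono)
  finally show ?case
    using insert.IH insert.hyps unfolding z_def by (simp add: algebra_simps)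
qed

lemma convex_combination_attains:
  fixes c0 c1 m :: real
  assumes "c0 \<le> m" "m \<le> c1"
  obtains \<mu> where "0 \<le> \<mu>" "\<mu> \<le> 1" "(1 - \<mu>) * c0 + \<mu> * c1 = m"
proof -
  have "continuous_on {0..1} (\<lambda>\<mu>::real. (1 - \<mu>) * c0 + \<mu> * c1)"
    by (intro continuous_intros)
  then show ?thesis
    using IVT'[of "\<lambda>\<mu>. (1 - \<mu>) * c0 + \<mu> * c1" 0 m 1] assms that by auto
qed

lemma exists_value_between:
  assumes "affine_in_steps f" "tail_bounded f B \<gamma>" "f \<pi> < f \<pi>'"
  shows "\<exists>r. f \<pi> < f r \<and> f r < f \<pi>'"
proof -
  define H where "H k = (\<lambda>t. if t < k then \<pi>' t else \<pi> t)" for k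
  obtain n where n: "B * \<gamma> ^ n < f \<pi>' - f \<pi>"
    using tail_bounded_eventually_small[OF assms(2), where \<epsilon> = "f \<pi>' - f \<pi>"] assms(3)
    by auto
  have "\<bar>f (H n) - f \<pi>'\<bar> \<le> B * \<gamma> ^ n"
    by (rule tail_boundedD[OF assms(2)]) (simp add: H_def)
  then have "f \<pi> < f (H n)"
    using n by linarith
  \<comment> \<open>At the first switch lifting the value above f \<pi>, the value moves affinely across the band.\<close>
  define k where "k = (LEAST k. f \<pi> < f (H k))"
  have above: "f \<pi> < f (H k)"
    unfolding k_def by (rule LeastI) fact
  have "H 0 = \<pi>"
    by (simp add: H_def)
  with above have "k \<noteq> 0"
    by (metis less_irrefl)
  then obtain j where j: "k = Suc j"
    using not0_implies_Suc by blast
  have "j < k"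
    using j by simp
  then have "\<not> f \<pi> < f (H j)"
    unfolding k_def by (rule not_less_Least)
  then have below: "f (H j) \<le> f \<pi>"
    by simp
  have ends: "(H j)(j := \<pi> j) = H j" "(H j)(j := \<pi>' j) = H k"
    by (auto simp: H_def j)
  have segment: "f ((H j)(j := \<lambda>s. mix_pmf \<mu> (\<pi> j s) (\<pi>' j s))) = (1 - \<mu>) * f (H j) + \<mu> * f (H k)"
    if "0 \<le> \<mu>" "\<mu> \<le> 1" for \<mu>
    using affine_in_stepsD[OF assms(1) that, of "H j" j "\<pi> j" "\<pi>' j"] unfolding ends .
  define m where "m = min (f (H k)) ((f \<pi> + f \<pi>') / 2)"
  have "f \<pi> < m" "m < f \<pi>'"
    using above assms(3) unfolding m_def min_def by auto
  moreover obtain \<mu> where "0 \<le> \<mu>" "\<mu> \<le> 1" "(1 - \<mu>) * f (H j) + \<mu> * f (H k) = m"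
    by (rule convex_combination_attains[of "f (H j)" m "f (H k)"])
      (use below \<open>f \<pi> < m\<close> in \<open>auto simp: m_def\<close>)
  ultimately show ?thesis
    using segment[of \<mu>] by metis
qed

lemma perturbation_neighbourhood:
  assumes "affine_in_steps f" "tail_bounded f B \<gamma>" "0 < \<epsilon>"
  shows "\<exists>N l. 0 < l \<and> l \<le> 1 \<and>
    (\<forall>v w. (\<forall>t<N. v t = r t) \<longrightarrow> \<bar>f (perturb_on {..<N} l v w) - f r\<bar> < \<epsilon>)"
proof -
  have B: "0 \<le> B"
    using tail_bounded_diameter[OF assms(2), of r r] by simp
  obtain N where N: "B * \<gamma> ^ N < \<epsilon> / 2"
    using tail_bounded_eventually_small[OF assms(2), where \<epsilon> = "\<epsilon> / 2"] assms(3)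
    by auto
  define K where "K = real N * B + 1"
  have K: "0 < K"
    using B unfolding K_def by (simp add: add_nonneg_pos)
  define l where "l = min 1 (\<epsilon> / (2 * K))"
  have l: "0 < l" "l \<le> 1"
    using assms(3) K unfolding l_def by auto
  have "real N * l * B \<le> K * l"
    using l unfolding K_def by (simp add: algebra_simps)
  also have "\<dots> \<le> K * (\<epsilon> / (2 * K))"
    using K unfolding l_def by (intro mult_left_mono) simp_all
  also have "\<dots> = \<epsilon> / 2"
    using K by simp
  finally have small: "real N * l * B \<le> \<epsilon> / 2" .
  have "\<bar>f (perturb_on {..<N} l v w) - f r\<bar> < \<epsilon>" if "\<forall>t<N. v t = r t" for v w
  proof -
    have "\<bar>f v - f r\<bar> \<le> B * \<gamma> ^ N"
      by (rule tail_boundedD[OF assms(2)]) (use that in simp)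
    moreover have "\<bar>f (perturb_on {..<N} l v w) - f v\<bar> \<le> real N * l * B"
      using abs_perturb_on_diff_le[OF assms(1) tail_bounded_diameter[OF assms(2)], of l "{..<N}"] l
      by simp
    ultimately show ?thesis
      using N small by linarith
  qed
  with l show ?thesis
    by blast
qed

lemma constant_if_constant_near:
  assumes "affine_in_steps f" "0 < l" "l \<le> 1"
    and near: "\<And>v w. (\<And>t. t < N \<Longrightarrow> v t = r t) \<Longrightarrow> f (perturb_on {..<N} l v w) = c"
  shows "f z = c"
proof -
  have "\<forall>v w. (\<forall>t. k \<le> t \<and> t < N \<longrightarrow> v t = r t) \<longrightarrow> f (perturb_on {k..<N} l v w) = c"
    if "k \<le> N" for k
    using that
  proof (induction k)
    case 0
    then show ?case
      using near by (simp add: atLeast0LessThan)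
  next
    case (Suc k)
    show ?case
    proof (intro allI impI)
      fix v w
      assume v: "\<forall>t. Suc k \<le> t \<and> t < N \<longrightarrow> v t = r t"
      define z where "z = perturb_on {Suc k..<N} l v w"
      have "k < N"
        using Suc.prems by simp
      moreover have "t \<in> {k..<N} \<longleftrightarrow> t \<in> {Suc k..<N}" if "t \<noteq> k" for t
        using that by auto
      ultimately have eq_mix:
          "perturb_on {k..<N} l (v(k := r k)) (w(k := v k)) = z(k := \<lambda>s. mix_pmf l (r k s) (v k s))"
        and eq_r: "perturb_on {k..<N} l (v(k := r k)) (w(k := r k)) = z(k := r k)"
        and eq_v: "z(k := v k) = z"
        by (simp_all add: fun_eq_iff z_def perturb_on_def)
      have "\<forall>t. k \<le> t \<and> t < N \<longrightarrow> (v(k := r k)) t = r t"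
        using v by (auto simp: Suc_le_eq)
      then have IH: "f (perturb_on {k..<N} l (v(k := r k)) w') = c" for w'
        using Suc.IH Suc.prems by simp
      \<comment> \<open>f is affine on the segment from r k to v k at step k and equals c at r k and at
        the point with weight l, hence also at v k.\<close>
      have "f (z(k := \<lambda>s. mix_pmf l (r k s) (v k s))) = (1 - l) * f (z(k := r k)) + l * f z"
        using affine_in_stepsD[OF assms(1), of l z k "r k" "v k"] assms(2,3) unfolding eq_v by simp
      then have "c = (1 - l) * c + l * f z"
        using IH[of "w(k := v k)"] IH[of "w(k := r k)"] unfolding eq_mix eq_r by simp
      then show "f (perturb_on {Suc k..<N} l v w) = c"
        using assms(2) unfolding z_def by (simp add: algebra_simps)
    qed
  qed
  from this[OF order.refl, rule_format, of z z] show ?thesis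
    by (simp, metis leD)
qed

lemma trivial_if_unexploitable_tie:
  assumes "affine_in_steps f" "affine_in_steps g" "tail_bounded g B \<gamma>"
    and unexploitable: "\<And>x y. f y < f x \<Longrightarrow> g y \<le> g x"
    and tie: "f \<pi> = f \<pi>'" and gap: "g \<pi> < g \<pi>'"
  shows "trivial_on f UNIV"
proof -
  have band: "f z = f \<pi>" if "g \<pi> < g z" "g z < g \<pi>'" for z
  proof -
    have "f z \<le> f \<pi>'"
      using unexploitable[of \<pi>' z] that(2) by (meson not_le)
    moreover have "f \<pi> \<le> f z"
      using unexploitable[of z \<pi>] that(1) by (meson not_le)
    ultimately show ?thesis
      using tie by linarith
  qed
  obtain r where r: "g \<pi> < g r" "g r < g \<pi>'"
    using exists_value_between[where f = g, OF assms(2,3) gap] by blast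
  have "0 < min (g r - g \<pi>) (g \<pi>' - g r)"
    using r by simp
  then obtain N l where l: "0 < l" "l \<le> 1" and
    near: "\<forall>v w. (\<forall>t<N. v t = r t) \<longrightarrow>
      \<bar>g (perturb_on {..<N} l v w) - g r\<bar> < min (g r - g \<pi>) (g \<pi>' - g r)"
    using perturbation_neighbourhood[OF assms(2,3)] by blast
  have "f z = f \<pi>" for z
  proof (rule constant_if_constant_near[OF assms(1) l])
    fix v w
    assume "\<And>t. t < N \<Longrightarrow> v t = r t"
    with near show "f (perturb_on {..<N} l v w) = f \<pi>"
      by (intro band) (auto simp: abs_less_iff)
  qed
  then show ?thesis
    unfolding trivial_on_def by blast
qed

lemma discordant_pair_if_not_equivalent:
  assumes "affine_in_steps f" "affine_in_steps g" "tail_bounded f B \<gamma>" "tail_bounded g B \<gamma>"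
    and "\<not> trivial_on f UNIV" "\<not> trivial_on g UNIV" "\<not> equivalent_on f g UNIV"
  shows "\<exists>x y. f y < f x \<and> g x < g y"
proof (rule ccontr)
  assume "\<not> ?thesis"
  then have fg: "f y < f x \<Longrightarrow> g y \<le> g x" and gf: "g y < g x \<Longrightarrow> f y \<le> f x" for x y
    by (meson not_le)+
  obtain x y where "\<not> (f y \<le> f x \<longleftrightarrow> g y \<le> g x)"
    using assms(7) unfolding equivalent_on_def by blast
  then consider "f y \<le> f x" "g x < g y" | "f x < f y" "g y \<le> g x"
    by fastforce
  then show False
  proof cases
    case 1
    with fg[of y x] have "f x = f y"
      by fastforce
    with 1 have "trivial_on f UNIV"
      using trivial_if_unexploitable_tie[OF assms(1,2,4) fg] by blast
    with assms(5) show False ..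
  next
    case 2
    with gf[of y x] have "g x = g y"
      by fastforce
    with 2 have "trivial_on g UNIV"
      using trivial_if_unexploitable_tie[OF assms(2,1,3) gf] by blast
    with assms(6) show False ..
  qed
qed

theorem mainTheorem1:
  fixes T T' :: "('s::finite, 'a::finite) transition"
    and d0 :: "'s pmf" and R :: "'s \<Rightarrow> 'a \<Rightarrow> real" and \<gamma> :: real
  assumes "CARD('a) > 1"
    and "0 \<le> \<gamma>" and "\<gamma> < 1"
    and "all_reachable T d0" and "all_reachable T' d0"
    and "\<not> trivial_on (J T d0 R \<gamma>) UNIV"
    and "\<not> trivial_on (J T' d0 R \<gamma>) UNIV"
    and "\<not> equivalent_on (J T d0 R \<gamma>) (J T' d0 R \<gamma>) UNIV"
  shows "exploitable T T' UNIV d0 R \<gamma>"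
proof -
  obtain M where M: "\<And>s a. \<bar>R s a\<bar> \<le> M"
    using finite_reward_bounded by blast
  note affine = affine_in_steps_J[where R = R, OF M assms(2,3)]
  note tail = tail_bounded_J[where R = R, OF M assms(2,3)]
  have "\<exists>\<pi> \<pi>'. J T d0 R \<gamma> \<pi>' < J T d0 R \<gamma> \<pi> \<and> J T' d0 R \<gamma> \<pi> < J T' d0 R \<gamma> \<pi>'"
    by (rule discordant_pair_if_not_equivalent[OF affine affine tail tail assms(6-8)])
  then show ?thesis
    unfolding exploitable_def by blast
qed
end
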